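(* Let $(z_n)_{n\ge0}$ be a homogeneous Markov chain on $\mathbb{Z}_+^k$ satisfying assumptions (A1) and (A2) below with maps $p_w:S_k\to[0,1]$, and let $\mathcal{F}_n$ be the $\sigma$-field generated by $z_0,\dots,z_n$. There exist sequences of random variables $(U_n)$ and $(b_n)$ in $\mathbb{R}^k$ adapted to $(\mathcal{F}_n)$, and a real number $K>0$, such that: (i) if $z_n\neq0$, then $$x_{n+1}-x_n=\frac1{|z_n|}\Big(\sum_{w}p_w(x_n)\big(w-x_n\alpha(w)\big)+U_{n+1}+b_{n+1}\Big);$$ (ii) $E[U_{n+1}\mid z_n]=0$; (iii) $\|U_n\|\le4m$ and $E[\|U_{n+1}\|^2\mid\mathcal{F}_n]\le4m^2$; (iv) $\|b_{n+1}\|\le\frac{K}{\max\{1,|z_n|\}}$.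
   Context: Fix integers $k\ge1$, $m\ge1$. For $w\in\mathbb{Z}^k$, $|w|=\sum_i|w^i|$, $\alpha(w)=\sum_iw^i$; the sum over $w$ ranges over $w\in\mathbb{Z}^k$ with $|w|\le m$. $\|\cdot\|$ is the Euclidean norm. $\mathbb{Z}_+^k=\{z\in\mathbb{Z}^k:z^i\ge0\}$, $S_k=\{x\in\mathbb{R}^k:x^i\ge0,\sum_ix^i=1\}$. $(z_n)$ has transition kernel $\Pi(z,z')=P[z_{n+1}=z'\mid z_n=z]$; $x_n=z_n/|z_n|$ if $z_n\ne0$, else $x_n=0$. (A1) $|z_{n+1}-z_n|\le m$ for all $n$. (A2) There exist Lipschitz maps $p_w:S_k\to[0,1]$ ($|w|\le m$) and $a>0$ with $|p_w(z/|z|)-\Pi(z,z+w)|\le a/|z|$ for all nonzero $z\in\mathbb{Z}_+^k$, $|w|\le m$. *)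

theory Defs
  imports "HOL-Analysis.Analysis" "HOL-Probability.Probability"
begin

definition l1norm :: "int ^ 'k \<Rightarrow> int" where
  "l1norm z = (\<Sum>i\<in>UNIV. \<bar>z $ i\<bar>)"

definition alpha :: "int ^ 'k \<Rightarrow> int" where
  "alpha w = (\<Sum>i\<in>UNIV. w $ i)"

definition Zplus :: "(int ^ 'k) set" where
  "Zplus = {z. \<forall>i. 0 \<le> z $ i}"

definition std_simplex :: "(real ^ 'k) set" where
  "std_simplex = {x. (\<forall>i. 0 \<le> x $ i) \<and> (\<Sum>i\<in>UNIV. x $ i) = 1}"

definition rvec :: "int ^ 'k \<Rightarrow> real ^ 'k" where
  "rvec z = (\<chi> i. real_of_int (z $ i))"

definition normalize_st :: "int ^ 'k \<Rightarrow> real ^ 'k" where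
  "normalize_st z = (if z = 0 then 0 else (1 / real_of_int (l1norm z)) *\<^sub>R rvec z)"

definition steps :: "nat \<Rightarrow> (int ^ 'k) set" where
  "steps m = {w. l1norm w \<le> int m}"

definition gen_filtration :: "'a measure \<Rightarrow> (nat \<Rightarrow> 'a \<Rightarrow> 'b) \<Rightarrow> nat \<Rightarrow> 'a measure" where
  "gen_filtration M z n = sigma (space M) (\<Union>i\<in>{..n}. {z i -` A \<inter> space M | A. True})"

end

theory Submission
  imports Defs
begin

text \<open>Write \<open>x(y) = y / |y|\<close> and \<open>D(y, y') = (y' - y) - \<alpha>(y' - y) x(y)\<close>. Since
  \<open>|y'| - |y| = \<alpha>(y' - y)\<close> for states in \<open>Z_+^k\<close> and jumps are bounded by \<open>m\<close>,
  \<open>|y| (x(y') - x(y))\<close> equals \<open>D(y, y')\<close> up to an error of order \<open>1/|y|\<close>. Take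
  \<open>U\<^sub>n\<^sub>+\<^sub>1\<close> to be \<open>D(z\<^sub>n, z\<^sub>n\<^sub>+\<^sub>1)\<close> minus its one-step mean
  \<open>\<Sum>\<^sub>w \<Pi>(z\<^sub>n, z\<^sub>n + w) D(z\<^sub>n, z\<^sub>n + w)\<close>: it is bounded by \<open>4m\<close>, centred given
  \<open>z\<^sub>n\<close>, and its conditional second moment is a variance, hence at most \<open>(2m)\<^sup>2\<close>.
  Replacing \<open>\<Pi>\<close> by \<open>p\<close> in the one-step mean costs another \<open>O(1/|y|)\<close> by (A2), and
  everything left over is \<open>b\<^sub>n\<^sub>+\<^sub>1\<close>. Conditional expectations given \<open>\<F>\<^sub>n\<close> are computed
  on the countably many fibres \<open>{z\<^sub>n = y}\<close>, on each of which the Markov property gives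
  the law of the next state.\<close>

lemma finite_steps: "finite (steps m :: (int ^ 'k) set)"
proof -
  have "steps m \<subseteq> vec_lambda ` (PiE UNIV (\<lambda>_::'k. {-int m..int m}))"
  proof
    fix w :: "int ^ 'k" assume "w \<in> steps m"
    then have "(\<Sum>i\<in>UNIV. \<bar>w $ i\<bar>) \<le> int m" by (simp add: steps_def l1norm_def)
    then have "\<bar>w $ i\<bar> \<le> int m" for i
      using member_le_sum[of i UNIV "\<lambda>i. \<bar>w $ i\<bar>"] by auto
    then have "(\<lambda>i. w $ i) \<in> PiE UNIV (\<lambda>_::'k. {-int m..int m})"
      by (auto simp: PiE_UNIV_domain abs_le_iff minus_le_iff)
    then show "w \<in> vec_lambda ` (PiE UNIV (\<lambda>_::'k. {-int m..int m}))"
      by (intro image_eqI[where x="\<lambda>i. w $ i"]) auto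
  qed
  then show ?thesis by (rule finite_subset) (intro finite_imageI finite_PiE; simp)
qed

lemma zero_in_steps: "0 \<in> steps m"
  by (simp add: steps_def l1norm_def)

lemma l1norm_eq_alpha: "z \<in> Zplus \<Longrightarrow> l1norm z = alpha z"
  by (simp add: l1norm_def alpha_def Zplus_def)

lemma alpha_add: "alpha (x + y) = alpha x + alpha y"
  by (simp add: alpha_def sum.distrib)

lemma abs_alpha_le_l1norm: "\<bar>alpha w\<bar> \<le> l1norm w"
  unfolding alpha_def l1norm_def by (rule sum_abs)

lemma norm_rvec_le_l1norm: "norm (rvec w) \<le> real_of_int (l1norm w)"
  using norm_le_l1_cart[of "rvec w"] by (simp add: rvec_def l1norm_def)

lemma l1norm_pos: "z \<in> Zplus \<Longrightarrow> z \<noteq> 0 \<Longrightarrow> 0 < l1norm z"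
proof -
  assume "z \<noteq> 0"
  then obtain i where "z $ i \<noteq> 0" by (auto simp: vec_eq_iff)
  then have "0 < \<bar>z $ i\<bar>" by auto
  also have "\<dots> \<le> l1norm z" unfolding l1norm_def by (rule member_le_sum) auto
  finally show ?thesis .
qed

lemma norm_normalize_st_le_1: "z \<in> Zplus \<Longrightarrow> norm (normalize_st z) \<le> 1"
proof (cases "z = 0")
  case False
  assume z: "z \<in> Zplus"
  have pos: "0 < real_of_int (l1norm z)" using l1norm_pos[OF z False] by simp
  have "norm (normalize_st z) = norm (rvec z) / real_of_int (l1norm z)"
    using False pos by (simp add: normalize_st_def)
  also have "\<dots> \<le> 1" using norm_rvec_le_l1norm[of z] pos by simp
  finally show ?thesis .
qed (simp add: normalize_st_def)

definition increment :: "int ^ 'k \<Rightarrow> int ^ 'k \<Rightarrow> real ^ 'k" where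
  "increment y y' = rvec (y' - y) - real_of_int (alpha (y' - y)) *\<^sub>R normalize_st y"

lemma norm_increment_le:
  assumes "y \<in> Zplus" "w \<in> steps m"
  shows "norm (increment y (y + w)) \<le> 2 * real m"
proof -
  have w: "real_of_int (l1norm w) \<le> real m" using assms(2) by (simp add: steps_def)
  have "norm (increment y (y + w)) \<le> norm (rvec w) + \<bar>real_of_int (alpha w)\<bar> * norm (normalize_st y)"
    unfolding increment_def by (simp add: norm_triangle_ineq4[THEN order_trans])
  also have "\<dots> \<le> real m + real m * 1"
    using abs_alpha_le_l1norm[of w] w
    by (intro add_mono mult_mono norm_rvec_le_l1norm[THEN order_trans] norm_normalize_st_le_1 assms(1)) auto
  finally show ?thesis by simp
qed

lemma rescaled_difference_identity:
  fixes Y W :: "'a::real_vector" and N a :: real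
  assumes "N \<noteq> 0" "N + a \<noteq> 0"
  shows "N *\<^sub>R ((1 / (N + a)) *\<^sub>R (Y + W) - (1 / N) *\<^sub>R Y) - (W - (a / N) *\<^sub>R Y)
       = (- a / (N + a)) *\<^sub>R (W - (a / N) *\<^sub>R Y)"
proof -
  have "N *\<^sub>R ((1 / (N + a)) *\<^sub>R (Y + W) - (1 / N) *\<^sub>R Y) - (W - (a / N) *\<^sub>R Y)
      = (N / (N + a) - 1 + a / N) *\<^sub>R Y + (N / (N + a) - 1) *\<^sub>R W"
    using assms by (simp add: algebra_simps)
  also have "\<dots> = (a * a / (N * (N + a))) *\<^sub>R Y + (- a / (N + a)) *\<^sub>R W"
    using assms by (simp add: field_simps)
  also have "\<dots> = (- a / (N + a)) *\<^sub>R (W - (a / N) *\<^sub>R Y)"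
    by (simp add: algebra_simps)
  finally show ?thesis .
qed

text \<open>With \<open>N = |y|\<close>, \<open>N' = |y'| = N + \<alpha>(y' - y)\<close> and \<open>D = increment y y'\<close>, the error term is
  exactly \<open>-(\<alpha>(y' - y) / N') D\<close>; the bound uses \<open>N \<le> N' + m \<le> (m + 1) N'\<close>.\<close>
lemma norm_increment_error_le:
  assumes y: "y \<in> Zplus" and y': "y' \<in> Zplus" and y0: "y \<noteq> 0" and step: "y' - y \<in> steps m"
  shows "norm (real_of_int (l1norm y) *\<^sub>R (normalize_st y' - normalize_st y) - increment y y')
          \<le> 2 * (real m)\<^sup>2 * (real m + 1) / real_of_int (l1norm y)"
proof -
  define w where "w = y' - y"
  define N where "N = real_of_int (l1norm y)"
  define a where "a = real_of_int (alpha w)"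
  have y'_eq: "y' = y + w" by (simp add: w_def)
  have w: "w \<in> steps m" using step by (simp add: w_def)
  have l1w: "real_of_int (l1norm w) \<le> real m" using w by (simp add: steps_def)
  have a_le: "\<bar>a\<bar> \<le> real m"
    using abs_alpha_le_l1norm[of w] l1w unfolding a_def by linarith
  have N_pos: "0 < N" using l1norm_pos[OF y y0] by (simp add: N_def)
  have N': "real_of_int (l1norm y') = N + a"
    using l1norm_eq_alpha[OF y] l1norm_eq_alpha[OF y'] by (simp add: N_def a_def y'_eq alpha_add)
  have x: "normalize_st y = (1 / N) *\<^sub>R rvec y" by (simp add: normalize_st_def y0 N_def)
  show ?thesis
  proof (cases "y' = 0")
    case True
    then have "w = - y" by (simp add: w_def)
    then have alpha_w: "real_of_int (alpha (- y)) = - N" and l1w_eq: "l1norm w = l1norm y"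
      using l1norm_eq_alpha[OF y] by (simp_all add: N_def alpha_def l1norm_def sum_negf)
    then have "increment y y' = 0"
      using N_pos by (simp add: increment_def x True vec_eq_iff rvec_def)
    then have "norm (N *\<^sub>R (normalize_st y' - normalize_st y) - increment y y') = norm (rvec y)"
      using N_pos by (simp add: True x normalize_st_def[of 0])
    also have "\<dots> \<le> N" using norm_rvec_le_l1norm[of y] by (simp add: N_def)
    also have "\<dots> \<le> real m * real m / N"
    proof -
      have "N \<le> real m" using l1w l1w_eq by (simp add: N_def)
      then have "N * N \<le> real m * real m" using N_pos by (intro mult_mono) auto
      then show ?thesis using N_pos by (simp add: field_simps)
    qed
    also have "\<dots> \<le> 2 * (real m)\<^sup>2 * (real m + 1) / N"
      using N_pos by (intro divide_right_mono) (auto simp: power2_eq_square algebra_simps)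
    finally show ?thesis by (simp add: N_def)
  next
    case False
    have N'_ge_1: "1 \<le> N + a" using l1norm_pos[OF y' False] N' by simp
    have D: "increment y y' = rvec w - (a / N) *\<^sub>R rvec y"
      by (simp add: increment_def w_def[symmetric] a_def x)
    have "rvec y' = rvec y + rvec w" by (simp add: y'_eq rvec_def vec_eq_iff)
    then have x': "normalize_st y' = (1 / (N + a)) *\<^sub>R (rvec y + rvec w)"
      using False N' by (simp add: normalize_st_def)
    then have "N *\<^sub>R (normalize_st y' - normalize_st y) - increment y y' = (- a / (N + a)) *\<^sub>R increment y y'"
      unfolding D x x' using N_pos N'_ge_1 by (intro rescaled_difference_identity) auto
    then have "norm (N *\<^sub>R (normalize_st y' - normalize_st y) - increment y y')
        = \<bar>a\<bar> / (N + a) * norm (increment y y')" using N'_ge_1 by simp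
    also have "\<dots> \<le> real m / (N + a) * (2 * real m)"
      using norm_increment_le[OF y w] a_le N'_ge_1 y'_eq by (intro mult_mono divide_right_mono) auto
    also have "\<dots> \<le> 2 * (real m)\<^sup>2 * (real m + 1) / N"
    proof -
      have "N \<le> (N + a) + real m" using a_le by simp
      also have "\<dots> \<le> (N + a) * (real m + 1)"
        using mult_left_mono[OF N'_ge_1, of "real m"] by (simp add: algebra_simps)
      finally have "real m * (2 * real m) * N \<le> real m * (2 * real m) * ((N + a) * (real m + 1))"
        by (intro mult_left_mono) auto
      then show ?thesis using N_pos N'_ge_1 by (simp add: field_simps power2_eq_square)
    qed
    finally show ?thesis by (simp add: N_def)
  qed
qed

lemma weighted_variance_le:
  fixes q :: "'b \<Rightarrow> real" and d :: "'b \<Rightarrow> 'v::real_inner"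
  assumes S: "finite S" and q_nonneg: "\<And>w. w \<in> S \<Longrightarrow> 0 \<le> q w" and q_sum: "sum q S \<le> 1"
    and d_le: "\<And>w. w \<in> S \<Longrightarrow> norm (d w) \<le> R"
  shows "(\<Sum>w\<in>S. q w * (norm (d w - (\<Sum>v\<in>S. q v *\<^sub>R d v)))\<^sup>2) \<le> R\<^sup>2"
proof -
  define c where "c = (\<Sum>v\<in>S. q v *\<^sub>R d v)"
  have sq: "(norm (d w - c))\<^sup>2 = (norm (d w))\<^sup>2 - 2 * inner (d w) c + (norm c)\<^sup>2" for w
    by (simp add: power2_norm_eq_inner inner_diff_left inner_diff_right inner_commute)
  have c_c: "inner c c = (\<Sum>w\<in>S. q w * inner (d w) c)"
    by (subst (1) c_def) (simp add: inner_sum_left)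
  have "(\<Sum>w\<in>S. q w * (norm (d w - c))\<^sup>2)
      = (\<Sum>w\<in>S. q w * (norm (d w))\<^sup>2) - 2 * inner c c + sum q S * (norm c)\<^sup>2"
    by (simp add: sq c_c algebra_simps sum.distrib sum_subtractf sum_distrib_left sum_distrib_right)
  also have "\<dots> \<le> (\<Sum>w\<in>S. q w * (norm (d w))\<^sup>2)"
  proof -
    have "sum q S * (norm c)\<^sup>2 \<le> 1 * (norm c)\<^sup>2" using q_sum by (intro mult_right_mono) auto
    then show ?thesis by (simp add: power2_norm_eq_inner) (use inner_ge_zero[of c] in linarith)
  qed
  also have "\<dots> \<le> (\<Sum>w\<in>S. q w * R\<^sup>2)"
    using d_le q_nonneg by (intro sum_mono mult_left_mono power_mono) auto
  also have "\<dots> = sum q S * R\<^sup>2" by (simp add: sum_distrib_right)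
  also have "\<dots> \<le> 1 * R\<^sup>2" using q_sum by (intro mult_right_mono) auto
  finally show ?thesis by (simp add: c_def)
qed

lemma measurable_compose_countable2:
  fixes f :: "'c::countable \<Rightarrow> 'd::countable \<Rightarrow> 'e::topological_space"
  assumes g: "g \<in> N \<rightarrow>\<^sub>M count_space UNIV" and h: "h \<in> N \<rightarrow>\<^sub>M count_space UNIV"
  shows "(\<lambda>\<omega>. f (g \<omega>) (h \<omega>)) \<in> borel_measurable N"
proof (rule measurable_compose_countable[where f="\<lambda>i \<omega>. f i (h \<omega>)", OF _ g])
  show "(\<lambda>\<omega>. f i (h \<omega>)) \<in> borel_measurable N" for i
    by (rule measurable_compose_countable[where f="\<lambda>j \<omega>. f i j", OF _ h]) simp
qed

lemma integral_eq_0_if_fibres_0: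
  fixes f :: "'a \<Rightarrow> real" and g :: "'a \<Rightarrow> 'b::countable"
  assumes f: "integrable M f" and g[measurable]: "g \<in> M \<rightarrow>\<^sub>M count_space UNIV"
    and fibres: "\<And>y. (\<integral>\<omega>. indicator {\<omega> \<in> space M. g \<omega> = y} \<omega> * f \<omega> \<partial>M) = 0"
  shows "(\<integral>\<omega>. f \<omega> \<partial>M) = 0"
proof -
  define A where "A K = {\<omega> \<in> space M. to_nat (g \<omega>) \<le> K}" for K
  have A_sets: "A K \<in> sets M" for K unfolding A_def by measurable
  have fibre_sets: "{\<omega> \<in> space M. g \<omega> = y} \<in> sets M" for y by measurable
  have "incseq A" by (auto simp: incseq_def A_def)
  moreover have "(\<Union>K. A K) = space M" by (auto simp: A_def)
  ultimately have "(\<lambda>K. LINT \<omega>:A K|M. f \<omega>) \<longlonglongrightarrow> (LINT \<omega>:space M|M. f \<omega>)"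
    using set_integral_cont_up[where A=A and f=f, OF A_sets] integrable_mult_indicator[OF sets.top f]
    by (simp add: set_integrable_def)
  moreover have "(\<lambda>K. LINT \<omega>:A K|M. f \<omega>) = (\<lambda>_. 0)"
  proof
    fix K
    define Y where "Y = (to_nat -` {..K} :: 'b set)"
    have "finite Y" unfolding Y_def by (rule finite_vimageI) auto
    then have "indicator (A K) \<omega> * f \<omega> = (\<Sum>y\<in>Y. indicator {\<omega> \<in> space M. g \<omega> = y} \<omega> * f \<omega>)" for \<omega>
      by (cases "\<omega> \<in> space M") (simp_all add: A_def Y_def indicator_def)
    then have "(LINT \<omega>:A K|M. f \<omega>) = (\<integral>\<omega>. (\<Sum>y\<in>Y. indicator {\<omega> \<in> space M. g \<omega> = y} \<omega> * f \<omega>) \<partial>M)"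
      by (simp add: set_lebesgue_integral_def)
    also have "\<dots> = (\<Sum>y\<in>Y. \<integral>\<omega>. indicator {\<omega> \<in> space M. g \<omega> = y} \<omega> * f \<omega> \<partial>M)"
      by (rule Bochner_Integration.integral_sum) (use integrable_mult_indicator[OF fibre_sets f] in simp)
    finally show "(LINT \<omega>:A K|M. f \<omega>) = 0" by (simp add: fibres)
  qed
  ultimately have "(LINT \<omega>:space M|M. f \<omega>) = 0" by (simp add: LIMSEQ_const_iff)
  then show ?thesis by (simp add: set_integral_space[OF f])
qed

locale Zplus_chain = prob_space M for M :: "'a measure" +
  fixes z :: "nat \<Rightarrow> 'a \<Rightarrow> int ^ 'k" and Pi :: "int ^ 'k \<Rightarrow> int ^ 'k \<Rightarrow> real" and m :: nat
  assumes z_measurable: "\<And>n. z n \<in> M \<rightarrow>\<^sub>M count_space UNIV"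
    and z_in_Zplus: "\<And>n \<omega>. \<omega> \<in> space M \<Longrightarrow> z n \<omega> \<in> Zplus"
    and kernel: "\<And>y. y \<in> Zplus \<Longrightarrow> (\<forall>y'. 0 \<le> Pi y y') \<and> (\<forall>y'. y' \<notin> Zplus \<longrightarrow> Pi y y' = 0)
                     \<and> (Pi y has_sum 1) Zplus"
    and markov: "\<And>n A y'. A \<in> sets (gen_filtration M z n) \<Longrightarrow>
        measure M (A \<inter> {\<omega> \<in> space M. z (Suc n) \<omega> = y'}) = (\<integral>\<omega>. indicator A \<omega> * Pi (z n \<omega>) y' \<partial>M)"
    and bounded_jumps: "\<And>n \<omega>. \<omega> \<in> space M \<Longrightarrow> l1norm (z (Suc n) \<omega> - z n \<omega>) \<le> int m"
begin

abbreviation F :: "nat \<Rightarrow> 'a measure" where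
  "F \<equiv> gen_filtration M z"

lemma space_F [simp]: "space (F n) = space M"
  by (simp add: gen_filtration_def space_measure_of_conv)

lemma sets_F: "sets (F n) = sigma_sets (space M) (\<Union>i\<in>{..n}. {z i -` A \<inter> space M | A. True})"
  unfolding gen_filtration_def by (rule sets_measure_of) auto

lemma sets_F_subset: "sets (F n) \<subseteq> sets M"
  unfolding sets_F by (rule sets.sigma_sets_subset) (use measurable_sets[OF z_measurable] in auto)

lemma z_measurable_F: "i \<le> n \<Longrightarrow> z i \<in> F n \<rightarrow>\<^sub>M count_space UNIV"
  by (rule measurableI) (auto simp: sets_F)

lemma Collect_z_in_F: "{\<omega> \<in> space M. P (z n \<omega>)} \<in> sets (F n)"
proof -
  have "{\<omega> \<in> space M. P (z n \<omega>)} = z n -` {y. P y} \<inter> space (F n)" by auto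
  also have "\<dots> \<in> sets (F n)" by (rule measurable_sets[OF z_measurable_F]) auto
  finally show ?thesis .
qed

lemma sigma_finite_subalgebra_of_subset:
  "sets N \<subseteq> sets M \<Longrightarrow> space N = space M \<Longrightarrow> sigma_finite_subalgebra M N"
  by (intro finite_measure_subalgebra_is_sigma_finite)
     (simp add: finite_measure_subalgebra_def finite_measure_subalgebra_axioms_def subalgebra_def)

lemma measurable_state_F: "(\<lambda>\<omega>. f (z n \<omega>)) \<in> borel_measurable (F n)"
  by (rule measurable_compose_countable2[where f="\<lambda>y _. f y" and g="z n" and h="z n"])
     (auto intro: z_measurable_F)

lemma measurable_transition_F:
  "(\<lambda>\<omega>. f (z n \<omega>) (z (Suc n) \<omega>)) \<in> borel_measurable (F (Suc n))"
  by (rule measurable_compose_countable2[OF z_measurable_F z_measurable_F]) auto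

lemma measurable_transition: "(\<lambda>\<omega>. f (z i \<omega>) (z j \<omega>)) \<in> borel_measurable M"
  by (rule measurable_compose_countable2[OF z_measurable z_measurable])

lemma jump_in_steps: "\<omega> \<in> space M \<Longrightarrow> z (Suc n) \<omega> - z n \<omega> \<in> steps m"
  using bounded_jumps by (simp add: steps_def)

lemma Pi_nonneg: "y \<in> Zplus \<Longrightarrow> 0 \<le> Pi y y'"
  using kernel by blast

lemma sum_Pi_steps_le_1:
  assumes y: "y \<in> Zplus"
  shows "(\<Sum>w\<in>steps m. Pi y (y + w)) \<le> 1"
proof -
  have "(\<Sum>w\<in>steps m. Pi y (y + w)) = sum (Pi y) ((+) y ` steps m)"
    by (subst sum.reindex) (auto simp: inj_on_def)
  also have "\<dots> \<le> 1"
    using kernel[OF y] finite_steps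
    by (intro has_sum_mono_neutral[OF has_sum_finite, where g="Pi y" and B=Zplus]) auto
  finally show ?thesis .
qed

lemma integrable_transition:
  fixes h :: "int ^ 'k \<Rightarrow> int ^ 'k \<Rightarrow> real"
  assumes h: "\<And>y w. y \<in> Zplus \<Longrightarrow> w \<in> steps m \<Longrightarrow> \<bar>h y (y + w)\<bar> \<le> C"
  shows "integrable M (\<lambda>\<omega>. h (z n \<omega>) (z (Suc n) \<omega>))"
proof (rule integrable_const_bound[where B=C])
  show "AE \<omega> in M. norm (h (z n \<omega>) (z (Suc n) \<omega>)) \<le> C"
  proof (rule AE_I2)
    fix \<omega> assume \<omega>: "\<omega> \<in> space M"
    show "norm (h (z n \<omega>) (z (Suc n) \<omega>)) \<le> C"
      using h[OF z_in_Zplus[OF \<omega>, of n] jump_in_steps[OF \<omega>, of n]] by simp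
  qed
qed (rule measurable_transition)

definition step_expectation :: "(int ^ 'k \<Rightarrow> int ^ 'k \<Rightarrow> real) \<Rightarrow> int ^ 'k \<Rightarrow> real" where
  "step_expectation h y = (\<Sum>w\<in>steps m. Pi y (y + w) * h y (y + w))"

lemma abs_step_expectation_le:
  assumes y: "y \<in> Zplus" and h: "\<And>w. w \<in> steps m \<Longrightarrow> \<bar>h y (y + w)\<bar> \<le> C"
  shows "\<bar>step_expectation h y\<bar> \<le> C"
proof -
  have "0 \<le> C" using h[OF zero_in_steps] by linarith
  have "\<bar>step_expectation h y\<bar> \<le> (\<Sum>w\<in>steps m. Pi y (y + w) * C)"
    unfolding step_expectation_def
    by (rule order_trans[OF sum_abs sum_mono]) (auto simp: abs_mult Pi_nonneg[OF y] intro!: mult_left_mono h)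
  also have "\<dots> \<le> 1 * C"
    unfolding sum_distrib_right[symmetric] by (intro mult_right_mono sum_Pi_steps_le_1 y \<open>0 \<le> C\<close>)
  finally show ?thesis by simp
qed

lemma integral_transition_fibre:
  assumes B: "B \<in> sets (F n)" and B_fibre: "B \<subseteq> {\<omega> \<in> space M. z n \<omega> = y}"
  shows "(\<integral>\<omega>. indicator B \<omega> * h (z n \<omega>) (z (Suc n) \<omega>) \<partial>M) = step_expectation h y * measure M B"
proof -
  have B_sets: "B \<in> sets M" using B sets_F_subset by auto
  define E where "E w = B \<inter> {\<omega> \<in> space M. z (Suc n) \<omega> = y + w}" for w
  have E_sets: "E w \<in> sets M" for w
    unfolding E_def using B_sets Collect_z_in_F[of "\<lambda>y'. y' = y + w" "Suc n"] sets_F_subset by auto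
  have split: "indicator B \<omega> * h (z n \<omega>) (z (Suc n) \<omega>) = (\<Sum>w\<in>steps m. h y (y + w) * indicator (E w) \<omega>)"
    if \<omega>: "\<omega> \<in> space M" for \<omega>
  proof (cases "\<omega> \<in> B")
    case True
    then have zy: "z n \<omega> = y" using B_fibre by auto
    define w0 where "w0 = z (Suc n) \<omega> - y"
    have w0: "w0 \<in> steps m" using jump_in_steps[OF \<omega>, of n] zy by (simp add: w0_def)
    have "h y (y + w) * indicator (E w) \<omega> = (if w = w0 then h y (y + w) else 0)" for w
      using True \<omega> by (auto simp: E_def w0_def indicator_def)
    then have "(\<Sum>w\<in>steps m. h y (y + w) * indicator (E w) \<omega>) = h y (y + w0)"
      using w0 by (simp add: finite_steps)
    then show ?thesis using True zy by (simp add: w0_def)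
  qed (simp add: E_def)
  have "(\<integral>\<omega>. indicator B \<omega> * h (z n \<omega>) (z (Suc n) \<omega>) \<partial>M)
      = (\<Sum>w\<in>steps m. h y (y + w) * measure M (E w))"
    using E_sets finite_steps
    by (simp add: Bochner_Integration.integral_cong[OF refl split] less_top[symmetric])
  also have "\<dots> = (\<Sum>w\<in>steps m. h y (y + w) * (Pi y (y + w) * measure M B))"
  proof (intro sum.cong refl arg_cong2[where f="(*)"])
    fix w
    have "measure M (E w) = (\<integral>\<omega>. indicator B \<omega> * Pi (z n \<omega>) (y + w) \<partial>M)"
      unfolding E_def by (rule markov[OF B])
    also have "\<dots> = (\<integral>\<omega>. Pi y (y + w) * indicator B \<omega> \<partial>M)"
      by (rule Bochner_Integration.integral_cong[OF refl]) (use B_fibre in \<open>auto simp: indicator_def\<close>)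
    finally show "measure M (E w) = Pi y (y + w) * measure M B" using B_sets by simp
  qed
  finally show ?thesis
    by (simp add: step_expectation_def sum_distrib_left mult_ac)
qed

lemma integral_transition:
  assumes A: "A \<in> sets (F n)" and h: "\<And>y w. y \<in> Zplus \<Longrightarrow> w \<in> steps m \<Longrightarrow> \<bar>h y (y + w)\<bar> \<le> C"
  shows "(\<integral>\<omega>. indicator A \<omega> * h (z n \<omega>) (z (Suc n) \<omega>) \<partial>M)
       = (\<integral>\<omega>. indicator A \<omega> * step_expectation h (z n \<omega>) \<partial>M)"
proof -
  define H where "H \<omega> = h (z n \<omega>) (z (Suc n) \<omega>)" for \<omega>
  define S where "S \<omega> = step_expectation h (z n \<omega>)" for \<omega>
  have A_sets: "A \<in> sets M" using A sets_F_subset by auto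
  have H: "integrable M (\<lambda>\<omega>. indicator B \<omega> * H \<omega>)" if "B \<in> sets M" for B
    using integrable_mult_indicator[OF that integrable_transition[where h=h, OF h]] by (simp add: H_def)
  have S_int: "integrable M S"
    unfolding S_def
    by (rule integrable_transition[where h="\<lambda>y _. step_expectation h y"]) (auto intro: abs_step_expectation_le h)
  then have S: "integrable M (\<lambda>\<omega>. indicator B \<omega> * S \<omega>)" if "B \<in> sets M" for B
    using integrable_mult_indicator[OF that S_int] by simp
  have "(\<integral>\<omega>. indicator A \<omega> * (H \<omega> - S \<omega>) \<partial>M) = 0"
  proof (rule integral_eq_0_if_fibres_0[OF _ z_measurable])
    show "integrable M (\<lambda>\<omega>. indicator A \<omega> * (H \<omega> - S \<omega>))"
      using H[OF A_sets] S[OF A_sets] by (simp add: right_diff_distrib)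
    fix y
    define B where "B = A \<inter> {\<omega> \<in> space M. z n \<omega> = y}"
    have B: "B \<in> sets (F n)" unfolding B_def using A Collect_z_in_F[of "\<lambda>v. v = y" n] by blast
    then have B_sets: "B \<in> sets M" using sets_F_subset by auto
    have "(\<integral>\<omega>. indicator {\<omega> \<in> space M. z n \<omega> = y} \<omega> * (indicator A \<omega> * (H \<omega> - S \<omega>)) \<partial>M)
        = (\<integral>\<omega>. indicator B \<omega> * H \<omega> - indicator B \<omega> * S \<omega> \<partial>M)"
      by (rule Bochner_Integration.integral_cong) (auto simp: B_def indicator_def)
    also have "\<dots> = (\<integral>\<omega>. indicator B \<omega> * H \<omega> \<partial>M) - (\<integral>\<omega>. indicator B \<omega> * S \<omega> \<partial>M)"
      by (rule Bochner_Integration.integral_diff[OF H[OF B_sets] S[OF B_sets]])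
    also have "(\<integral>\<omega>. indicator B \<omega> * S \<omega> \<partial>M) = (\<integral>\<omega>. step_expectation h y * indicator B \<omega> \<partial>M)"
      by (rule Bochner_Integration.integral_cong[OF refl]) (auto simp: S_def B_def indicator_def)
    finally show "(\<integral>\<omega>. indicator {\<omega> \<in> space M. z n \<omega> = y} \<omega> * (indicator A \<omega> * (H \<omega> - S \<omega>)) \<partial>M) = 0"
      using integral_transition_fibre[OF B, of y h] B_sets by (simp add: B_def H_def)
  qed
  then show ?thesis
    using H[OF A_sets] S[OF A_sets] by (simp add: right_diff_distrib H_def S_def)
qed

text \<open>Off the range of the chain the kernel may charge states outside \<open>y + steps m\<close>;
  only along the chain do the bounded jumps force the one-step weights to add up to one.\<close>
lemma sum_Pi_steps_AE: "AE \<omega> in M. (\<Sum>w\<in>steps m. Pi (z n \<omega>) (z n \<omega> + w)) = 1"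
proof -
  define S where "S \<omega> = (\<Sum>w\<in>steps m. Pi (z n \<omega>) (z n \<omega> + w))" for \<omega>
  have S_le: "0 \<le> S \<omega> \<and> S \<omega> \<le> 1" if "\<omega> \<in> space M" for \<omega>
    using sum_Pi_steps_le_1[OF z_in_Zplus[OF that]] Pi_nonneg[OF z_in_Zplus[OF that]]
    by (auto simp: S_def intro!: sum_nonneg)
  have "S \<in> borel_measurable M"
    unfolding S_def using measurable_transition[of "\<lambda>y _. \<Sum>w\<in>steps m. Pi y (y + w)" n n] by simp
  then have "integrable M S"
    using S_le by (intro integrable_const_bound[where B=1]) auto
  moreover have "(\<integral>\<omega>. S \<omega> \<partial>M) = 1"
  proof -
    have "(\<integral>\<omega>. S \<omega> \<partial>M) = (\<integral>\<omega>. indicator (space M) \<omega> * step_expectation (\<lambda>_ _. 1) (z n \<omega>) \<partial>M)"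
      by (rule Bochner_Integration.integral_cong) (auto simp: S_def step_expectation_def)
    also have "\<dots> = (\<integral>\<omega>. indicator (space M) \<omega> * 1 \<partial>M)"
      using integral_transition[OF sets.top[of "F n"], of "\<lambda>_ _. 1" 1] by simp
    finally show ?thesis by (simp add: prob_space)
  qed
  ultimately have "(\<integral>\<omega>. 1 - S \<omega> \<partial>M) = 0" and "integrable M (\<lambda>\<omega>. 1 - S \<omega>)"
    by (simp_all add: prob_space)
  moreover have "AE \<omega> in M. 0 \<le> 1 - S \<omega>"
    using S_le by (intro AE_I2) auto
  ultimately have "AE \<omega> in M. 1 - S \<omega> = 0"
    using integral_nonneg_eq_0_iff_AE[of M "\<lambda>\<omega>. 1 - S \<omega>"] by simp
  then show ?thesis by (auto simp: S_def)
qed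

definition mean_increment :: "int ^ 'k \<Rightarrow> real ^ 'k" where
  "mean_increment y = (\<Sum>w\<in>steps m. Pi y (y + w) *\<^sub>R increment y (y + w))"

definition centred_increment :: "int ^ 'k \<Rightarrow> int ^ 'k \<Rightarrow> real ^ 'k" where
  "centred_increment y y' = increment y y' - mean_increment y"

lemma norm_mean_increment_le:
  assumes y: "y \<in> Zplus"
  shows "norm (mean_increment y) \<le> 2 * real m"
proof -
  have "norm (mean_increment y) \<le> (\<Sum>w\<in>steps m. Pi y (y + w) * (2 * real m))"
    unfolding mean_increment_def
    by (rule order_trans[OF norm_sum sum_mono])
       (auto simp: Pi_nonneg[OF y] intro!: mult_left_mono norm_increment_le[OF y])
  also have "\<dots> \<le> 1 * (2 * real m)"
    unfolding sum_distrib_right[symmetric] by (intro mult_right_mono sum_Pi_steps_le_1 y) auto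
  finally show ?thesis by simp
qed

lemma norm_centred_increment_le:
  assumes "y \<in> Zplus" "w \<in> steps m"
  shows "norm (centred_increment y (y + w)) \<le> 4 * real m"
proof -
  have "norm (centred_increment y (y + w)) \<le> norm (increment y (y + w)) + norm (mean_increment y)"
    unfolding centred_increment_def by (rule norm_triangle_ineq4)
  also have "\<dots> \<le> 2 * real m + 2 * real m"
    by (intro add_mono norm_increment_le norm_mean_increment_le assms)
  finally show ?thesis by simp
qed

lemma norm_centred_increment_transition_le:
  assumes "\<omega> \<in> space M"
  shows "norm (centred_increment (z n \<omega>) (z (Suc n) \<omega>)) \<le> 4 * real m"
  using norm_centred_increment_le[OF z_in_Zplus[OF assms, of n] jump_in_steps[OF assms, of n]] by simp

lemma step_expectation_centred_increment:
  "step_expectation (\<lambda>y y'. centred_increment y y' $ i) y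
     = (1 - (\<Sum>w\<in>steps m. Pi y (y + w))) * mean_increment y $ i"
  by (simp add: step_expectation_def centred_increment_def mean_increment_def
      right_diff_distrib sum_subtractf sum_distrib_right left_diff_distrib)

lemma cond_exp_centred_increment:
  assumes N: "sets N \<subseteq> sets (F n)" "space N = space M"
  shows "AE \<omega> in M. real_cond_exp M N (\<lambda>\<omega>. centred_increment (z n \<omega>) (z (Suc n) \<omega>) $ i) \<omega> = 0"
proof (rule sigma_finite_subalgebra.real_cond_exp_charact[where g="\<lambda>_. 0"])
  show "sigma_finite_subalgebra M N"
    using N sets_F_subset by (intro sigma_finite_subalgebra_of_subset) auto
  have bound: "\<bar>centred_increment y (y + w) $ i\<bar> \<le> 4 * real m" if "y \<in> Zplus" "w \<in> steps m" for y w
    using component_le_norm_cart[of "centred_increment y (y + w)" i] norm_centred_increment_le[OF that]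
    by linarith
  show "integrable M (\<lambda>\<omega>. centred_increment (z n \<omega>) (z (Suc n) \<omega>) $ i)"
    by (rule integrable_transition[where h="\<lambda>y y'. centred_increment y y' $ i", OF bound])
  fix A assume "A \<in> sets N"
  then have A: "A \<in> sets (F n)" using N by auto
  have "(\<integral>\<omega>. indicator A \<omega> * centred_increment (z n \<omega>) (z (Suc n) \<omega>) $ i \<partial>M)
      = (\<integral>\<omega>. indicator A \<omega> * step_expectation (\<lambda>y y'. centred_increment y y' $ i) (z n \<omega>) \<partial>M)"
    using integral_transition[where h="\<lambda>y y'. centred_increment y y' $ i", OF A bound] by simp
  also have "\<dots> = 0"
    using sum_Pi_steps_AE[of n]
    by (intro integral_eq_zero_AE) (auto simp: step_expectation_centred_increment)
  finally show "(\<integral>\<omega>\<in>A. centred_increment (z n \<omega>) (z (Suc n) \<omega>) $ i \<partial>M) = (\<integral>\<omega>\<in>A. 0 \<partial>M)"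
    by (simp add: set_lebesgue_integral_def)
qed simp_all

lemma cond_exp_norm_centred_increment_sq_le:
  "AE \<omega> in M. real_cond_exp M (F n) (\<lambda>\<omega>. (norm (centred_increment (z n \<omega>) (z (Suc n) \<omega>)))\<^sup>2) \<omega>
     \<le> 4 * (real m)\<^sup>2"
proof -
  define h where "h y y' = (norm (centred_increment y y'))\<^sup>2" for y y'
  define g where "g \<omega> = step_expectation h (z n \<omega>)" for \<omega>
  have bound: "\<bar>h y (y + w)\<bar> \<le> (4 * real m)\<^sup>2" if "y \<in> Zplus" "w \<in> steps m" for y w
    using power_mono[OF norm_centred_increment_le[OF that] norm_ge_zero, of 2] by (simp add: h_def)
  have g_le: "\<bar>g \<omega>\<bar> \<le> (2 * real m)\<^sup>2" if "\<omega> \<in> space M" for \<omega>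
  proof -
    have y: "z n \<omega> \<in> Zplus" using z_in_Zplus[OF that] .
    have "0 \<le> g \<omega>" unfolding g_def step_expectation_def using Pi_nonneg[OF y] by (auto simp: h_def intro!: sum_nonneg)
    moreover have "g \<omega> \<le> (2 * real m)\<^sup>2"
      unfolding g_def step_expectation_def h_def centred_increment_def mean_increment_def
      by (rule weighted_variance_le) (auto simp: finite_steps Pi_nonneg[OF y] sum_Pi_steps_le_1[OF y] norm_increment_le[OF y])
    ultimately show ?thesis by simp
  qed
  have "AE \<omega> in M. real_cond_exp M (F n) (\<lambda>\<omega>. h (z n \<omega>) (z (Suc n) \<omega>)) \<omega> = g \<omega>"
  proof (rule sigma_finite_subalgebra.real_cond_exp_charact)
    show "sigma_finite_subalgebra M (F n)"
      using sets_F_subset by (intro sigma_finite_subalgebra_of_subset) auto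
    show "integrable M (\<lambda>\<omega>. h (z n \<omega>) (z (Suc n) \<omega>))"
      by (rule integrable_transition[where h=h, OF bound])
    show g_F: "g \<in> borel_measurable (F n)"
      unfolding g_def by (rule measurable_state_F)
    have "g \<in> borel_measurable M"
      by (rule measurable_from_subalg[OF _ g_F]) (simp add: subalgebra_def sets_F_subset)
    then show "integrable M g"
      using g_le by (intro integrable_const_bound[where B="(2 * real m)\<^sup>2"]) auto
    fix A assume "A \<in> sets (F n)"
    from integral_transition[where h=h, OF this bound]
    show "(\<integral>\<omega>\<in>A. h (z n \<omega>) (z (Suc n) \<omega>) \<partial>M) = (\<integral>\<omega>\<in>A. g \<omega> \<partial>M)"
      by (simp add: set_lebesgue_integral_def g_def)
  qed
  then show ?thesis
    using AE_space by eventually_elim (use g_le in \<open>auto simp: h_def power_mult_distrib abs_le_iff\<close>)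
qed

definition drift :: "(int ^ 'k \<Rightarrow> real ^ 'k \<Rightarrow> real) \<Rightarrow> int ^ 'k \<Rightarrow> real ^ 'k" where
  "drift p y = (\<Sum>w\<in>steps m. p w (normalize_st y) *\<^sub>R (rvec w - real_of_int (alpha w) *\<^sub>R normalize_st y))"

definition remainder :: "(int ^ 'k \<Rightarrow> real ^ 'k \<Rightarrow> real) \<Rightarrow> int ^ 'k \<Rightarrow> int ^ 'k \<Rightarrow> real ^ 'k" where
  "remainder p y y' = (if y = 0 then 0 else
     real_of_int (l1norm y) *\<^sub>R (normalize_st y' - normalize_st y) - drift p y - centred_increment y y')"

lemma normalize_st_difference:
  assumes "y \<in> Zplus" "y \<noteq> 0"
  shows "normalize_st y' - normalize_st y
       = (1 / real_of_int (l1norm y)) *\<^sub>R (drift p y + centred_increment y y' + remainder p y y')"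
  using l1norm_pos[OF assms] by (simp add: remainder_def assms(2))

lemma norm_remainder_le:
  fixes p :: "int ^ 'k \<Rightarrow> real ^ 'k \<Rightarrow> real" and a :: real
  assumes A2: "\<And>y w. y \<in> Zplus \<Longrightarrow> y \<noteq> 0 \<Longrightarrow> w \<in> steps m \<Longrightarrow>
        \<bar>p w (normalize_st y) - Pi y (y + w)\<bar> \<le> a / real_of_int (l1norm y)"
    and y: "y \<in> Zplus" and y0: "y \<noteq> 0" and y': "y' \<in> Zplus" and step: "y' - y \<in> steps m"
  shows "norm (remainder p y y')
    \<le> (2 * (real m)\<^sup>2 * (real m + 1) + real (card (steps m :: (int ^ 'k) set)) * (2 * real m) * a)
       / real_of_int (l1norm y)"
proof -
  define N where "N = real_of_int (l1norm y)"
  have N_pos: "0 < N" using l1norm_pos[OF y y0] by (simp add: N_def)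
  have "drift p y = (\<Sum>w\<in>steps m. p w (normalize_st y) *\<^sub>R increment y (y + w))"
    by (simp add: drift_def increment_def)
  then have "mean_increment y - drift p y
      = (\<Sum>w\<in>steps m. (Pi y (y + w) - p w (normalize_st y)) *\<^sub>R increment y (y + w))"
    by (simp add: mean_increment_def scaleR_diff_left sum_subtractf)
  moreover have "remainder p y y'
      = (N *\<^sub>R (normalize_st y' - normalize_st y) - increment y y') + (mean_increment y - drift p y)"
    by (simp add: remainder_def y0 N_def centred_increment_def)
  ultimately have remainder_eq: "remainder p y y'
      = (N *\<^sub>R (normalize_st y' - normalize_st y) - increment y y')
        + (\<Sum>w\<in>steps m. (Pi y (y + w) - p w (normalize_st y)) *\<^sub>R increment y (y + w))"
    by simp
  have "norm (\<Sum>w\<in>steps m. (Pi y (y + w) - p w (normalize_st y)) *\<^sub>R increment y (y + w))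
      \<le> (\<Sum>w\<in>(steps m :: (int ^ 'k) set). a / N * (2 * real m))"
  proof (rule order_trans[OF norm_sum sum_mono])
    fix w :: "int ^ 'k" assume w: "w \<in> steps m"
    have coeff: "\<bar>Pi y (y + w) - p w (normalize_st y)\<bar> \<le> a / N"
      using A2[OF y y0 w] by (simp add: N_def abs_minus_commute)
    have "\<bar>Pi y (y + w) - p w (normalize_st y)\<bar> * norm (increment y (y + w)) \<le> a / N * (2 * real m)"
      by (rule mult_mono[OF coeff norm_increment_le[OF y w]]) (use order_trans[OF abs_ge_zero coeff] in auto)
    then show "norm ((Pi y (y + w) - p w (normalize_st y)) *\<^sub>R increment y (y + w)) \<le> a / N * (2 * real m)"
      by simp
  qed
  then have kernel_error: "norm (\<Sum>w\<in>steps m. (Pi y (y + w) - p w (normalize_st y)) *\<^sub>R increment y (y + w))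
      \<le> real (card (steps m :: (int ^ 'k) set)) * (2 * real m) * a / N"
    by (simp add: mult_ac)
  have linearisation_error: "norm (N *\<^sub>R (normalize_st y' - normalize_st y) - increment y y')
      \<le> 2 * (real m)\<^sup>2 * (real m + 1) / N"
    using norm_increment_error_le[OF y y' y0 step] by (simp add: N_def)
  show ?thesis
    unfolding remainder_eq N_def[symmetric] add_divide_distrib
    by (rule norm_triangle_le[OF add_mono[OF linearisation_error kernel_error]])
qed

lemma remainder_transition_bounded:
  fixes p :: "int ^ 'k \<Rightarrow> real ^ 'k \<Rightarrow> real" and a :: real
  assumes A2: "\<And>y w. y \<in> Zplus \<Longrightarrow> y \<noteq> 0 \<Longrightarrow> w \<in> steps m \<Longrightarrow>
        \<bar>p w (normalize_st y) - Pi y (y + w)\<bar> \<le> a / real_of_int (l1norm y)"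
    and a: "0 \<le> a"
  obtains K where "0 < K"
    and "\<And>n \<omega>. \<omega> \<in> space M \<Longrightarrow>
      norm (remainder p (z n \<omega>) (z (Suc n) \<omega>)) \<le> K / max 1 (real_of_int (l1norm (z n \<omega>)))"
proof -
  define C where
    "C = 2 * (real m)\<^sup>2 * (real m + 1) + real (card (steps m :: (int ^ 'k) set)) * (2 * real m) * a"
  have "0 \<le> C" using a by (simp add: C_def)
  have "norm (remainder p (z n \<omega>) (z (Suc n) \<omega>)) \<le> (C + 1) / max 1 (real_of_int (l1norm (z n \<omega>)))"
    if \<omega>: "\<omega> \<in> space M" for n \<omega>
  proof (cases "z n \<omega> = 0")
    case False
    have N: "1 \<le> real_of_int (l1norm (z n \<omega>))" using l1norm_pos[OF z_in_Zplus[OF \<omega>] False] by simp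
    have "norm (remainder p (z n \<omega>) (z (Suc n) \<omega>)) \<le> C / real_of_int (l1norm (z n \<omega>))"
      using norm_remainder_le[OF A2 z_in_Zplus[OF \<omega>] False z_in_Zplus[OF \<omega>] jump_in_steps[OF \<omega>]]
      by (simp add: C_def)
    also have "\<dots> \<le> (C + 1) / max 1 (real_of_int (l1norm (z n \<omega>)))"
      using N by (simp add: divide_right_mono)
    finally show ?thesis .
  qed (use \<open>0 \<le> C\<close> in \<open>simp add: remainder_def\<close>)
  with \<open>0 \<le> C\<close> show thesis by (intro that[of "C + 1"]) auto
qed

end

theorem lemma1:
  fixes M :: "'a measure"
    and z :: "nat \<Rightarrow> 'a \<Rightarrow> int ^ 'k"
    and Pi :: "int ^ 'k \<Rightarrow> int ^ 'k \<Rightarrow> real"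
    and p :: "int ^ 'k \<Rightarrow> real ^ 'k \<Rightarrow> real"
    and m :: nat and a :: real
  assumes prob: "prob_space M"
    and meas: "\<And>n. z n \<in> M \<rightarrow>\<^sub>M count_space UNIV"
    and state: "\<And>n \<omega>. \<omega> \<in> space M \<Longrightarrow> z n \<omega> \<in> Zplus"
    and kernel: "\<And>y. y \<in> Zplus \<Longrightarrow> (\<forall>y'. 0 \<le> Pi y y') \<and> (\<forall>y'. y' \<notin> Zplus \<longrightarrow> Pi y y' = 0)
                     \<and> (Pi y has_sum 1) Zplus"
    and markov: "\<And>n A y'. A \<in> sets (gen_filtration M z n) \<Longrightarrow>
        measure M (A \<inter> {\<omega> \<in> space M. z (Suc n) \<omega> = y'}) = (\<integral>\<omega>. indicator A \<omega> * Pi (z n \<omega>) y' \<partial>M)"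
    and m_pos: "1 \<le> m"
    and A1: "\<And>n \<omega>. \<omega> \<in> space M \<Longrightarrow> l1norm (z (Suc n) \<omega> - z n \<omega>) \<le> int m"
    and p_lip: "\<And>w. w \<in> steps m \<Longrightarrow> \<exists>C. C-lipschitz_on std_simplex (p w)"
    and p_range: "\<And>w x. w \<in> steps m \<Longrightarrow> x \<in> std_simplex \<Longrightarrow> 0 \<le> p w x \<and> p w x \<le> 1"
    and a_pos: "a > 0"
    and A2: "\<And>y w. y \<in> Zplus \<Longrightarrow> y \<noteq> 0 \<Longrightarrow> w \<in> steps m \<Longrightarrow>
        \<bar>p w (normalize_st y) - Pi y (y + w)\<bar> \<le> a / real_of_int (l1norm y)"
  shows "\<exists>(U :: nat \<Rightarrow> 'a \<Rightarrow> real ^ 'k) (b :: nat \<Rightarrow> 'a \<Rightarrow> real ^ 'k) (K :: real).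
    K > 0
    \<and> (\<forall>n. U n \<in> borel_measurable (gen_filtration M z n) \<and> b n \<in> borel_measurable (gen_filtration M z n))
    \<and> (\<forall>n. \<forall>\<omega>\<in>space M. z n \<omega> \<noteq> 0 \<longrightarrow>
          normalize_st (z (Suc n) \<omega>) - normalize_st (z n \<omega>) =
          (1 / real_of_int (l1norm (z n \<omega>))) *\<^sub>R
            ((\<Sum>w\<in>steps m. p w (normalize_st (z n \<omega>)) *\<^sub>R
                 (rvec w - real_of_int (alpha w) *\<^sub>R normalize_st (z n \<omega>)))
             + U (Suc n) \<omega> + b (Suc n) \<omega>))
    \<and> (\<forall>n i. AE \<omega> in M. real_cond_exp M (vimage_algebra (space M) (z n) (count_space UNIV))
                              (\<lambda>\<omega>. U (Suc n) \<omega> $ i) \<omega> = 0)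
    \<and> (\<forall>n. \<forall>\<omega>\<in>space M. norm (U n \<omega>) \<le> 4 * real m)
    \<and> (\<forall>n. AE \<omega> in M. real_cond_exp M (gen_filtration M z n) (\<lambda>\<omega>. (norm (U (Suc n) \<omega>))\<^sup>2) \<omega> \<le> 4 * (real m)\<^sup>2)
    \<and> (\<forall>n. \<forall>\<omega>\<in>space M. norm (b (Suc n) \<omega>) \<le> K / max 1 (real_of_int (l1norm (z n \<omega>))))"
proof -
  interpret Zplus_chain M z Pi m
    using prob meas state kernel markov A1 by (simp add: Zplus_chain_def Zplus_chain_axioms_def)
  define U :: "nat \<Rightarrow> 'a \<Rightarrow> real ^ 'k" where
    "U = case_nat (\<lambda>_. 0) (\<lambda>n \<omega>. centred_increment (z n \<omega>) (z (Suc n) \<omega>))"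
  define b :: "nat \<Rightarrow> 'a \<Rightarrow> real ^ 'k" where
    "b = case_nat (\<lambda>_. 0) (\<lambda>n \<omega>. remainder p (z n \<omega>) (z (Suc n) \<omega>))"
  obtain K where "0 < K" and b_le: "\<And>n \<omega>. \<omega> \<in> space M \<Longrightarrow>
      norm (b (Suc n) \<omega>) \<le> K / max 1 (real_of_int (l1norm (z n \<omega>)))"
    using remainder_transition_bounded[OF A2 less_imp_le[OF a_pos]] by (auto simp: b_def)
  have decomposition: "normalize_st (z (Suc n) \<omega>) - normalize_st (z n \<omega>)
      = (1 / real_of_int (l1norm (z n \<omega>))) *\<^sub>R (drift p (z n \<omega>) + U (Suc n) \<omega> + b (Suc n) \<omega>)"
    if "\<omega> \<in> space M" "z n \<omega> \<noteq> 0" for n \<omega>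
    using normalize_st_difference[OF z_in_Zplus[OF that(1)] that(2)] by (simp add: U_def b_def)
  show ?thesis
  proof (rule exI[of _ U], rule exI[of _ b], rule exI[of _ K], intro conjI allI ballI impI)
    show "U n \<in> borel_measurable (F n)" for n
      by (cases n) (simp_all add: U_def measurable_transition_F)
    show "b n \<in> borel_measurable (F n)" for n
      by (cases n) (simp_all add: b_def measurable_transition_F)
    show "AE \<omega> in M. real_cond_exp M (vimage_algebra (space M) (z n) (count_space UNIV))
        (\<lambda>\<omega>. U (Suc n) \<omega> $ i) \<omega> = 0" for n i
      using cond_exp_centred_increment[OF sets_image_in_sets[OF space_F z_measurable_F]] by (simp add: U_def)
    show "norm (U n \<omega>) \<le> 4 * real m" if "\<omega> \<in> space M" for n \<omega>
      using norm_centred_increment_transition_le[OF that] by (cases n) (simp_all add: U_def)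
    show "AE \<omega> in M. real_cond_exp M (F n) (\<lambda>\<omega>. (norm (U (Suc n) \<omega>))\<^sup>2) \<omega> \<le> 4 * (real m)\<^sup>2" for n
      using cond_exp_norm_centred_increment_sq_le by (simp add: U_def)
  qed (use \<open>0 < K\<close> b_le decomposition in \<open>simp_all add: drift_def\<close>)
qed

end
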